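(* For all integers $n>1$ and $m\geq1$, $\operatorname{ecc}_{Z_{n,m}}(0)\geq\lfloor\frac{n(m+1)}{2}\rfloor$.
   Context: Elements of $\mathbb{Z}_n$ are identified with representatives in $\{0,\dots,n-1\}$. The dYoke graph $Z_{n,m}$ has vertices $u=(u_0,\dots,u_{m+1})\in\mathbb{Z}_n\times\{-1,0,1\}^m\times\mathbb{Z}_n$ with $\sum u_i\equiv0\pmod n$; $u,v$ adjacent if there is $0\leq i\leq m$ with $u_j=v_j$ for $j\notin\{i,i+1\}$ and either ($u_i=v_i+1$, $u_{i+1}=v_{i+1}-1$) or ($u_i=v_i-1$, $u_{i+1}=v_{i+1}+1$), arithmetic in coordinates $0,m+1$ in $\mathbb{Z}_n$. $\operatorname{ecc}_{Z_{n,m}}(0)$ is the maximum distance from the all-zero vertex $0$ to any vertex. *)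

theory Defs
  imports Main "HOL-Library.Extended_Nat"
begin

text \<open>Vertices of the dYoke graph Z_{n,m}: tuples (u_0,...,u_{m+1}) encoded as functions
  nat => int that vanish beyond index m+1; u_0, u_{m+1} are representatives in {0..n-1}
  of Z_n, middle coordinates in {-1,0,1}, and the total sum is 0 mod n.\<close>

definition dyoke_vertices :: "nat \<Rightarrow> nat \<Rightarrow> (nat \<Rightarrow> int) set" where
  "dyoke_vertices n m = {u.
      u 0 \<in> {0..int n - 1} \<and> u (m+1) \<in> {0..int n - 1}
    \<and> (\<forall>j. 1 \<le> j \<and> j \<le> m \<longrightarrow> u j \<in> {-1,0,1})
    \<and> (\<forall>j. j > m+1 \<longrightarrow> u j = 0)
    \<and> (\<Sum>j\<le>m+1. u j) mod int n = 0}"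

definition coord_eq :: "nat \<Rightarrow> nat \<Rightarrow> nat \<Rightarrow> int \<Rightarrow> int \<Rightarrow> bool" where
  "coord_eq n m j a b = (if j = 0 \<or> j = m+1 then a mod int n = b mod int n else a = b)"

definition dyoke_adj :: "nat \<Rightarrow> nat \<Rightarrow> (nat \<Rightarrow> int) \<Rightarrow> (nat \<Rightarrow> int) \<Rightarrow> bool" where
  "dyoke_adj n m u v \<longleftrightarrow> u \<in> dyoke_vertices n m \<and> v \<in> dyoke_vertices n m \<and>
     (\<exists>i\<le>m. (\<forall>j\<le>m+1. j \<noteq> i \<and> j \<noteq> i+1 \<longrightarrow> u j = v j) \<and>
        ((coord_eq n m i (u i) (v i + 1) \<and> coord_eq n m (i+1) (u (i+1)) (v (i+1) - 1)) \<or>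
         (coord_eq n m i (u i) (v i - 1) \<and> coord_eq n m (i+1) (u (i+1)) (v (i+1) + 1))))"

definition dyoke_dist :: "nat \<Rightarrow> nat \<Rightarrow> (nat \<Rightarrow> int) \<Rightarrow> (nat \<Rightarrow> int) \<Rightarrow> enat" where
  "dyoke_dist n m u v = (if \<exists>k. (dyoke_adj n m ^^ k) u v
       then enat (LEAST k. (dyoke_adj n m ^^ k) u v) else \<infinity>)"

definition dyoke_ecc :: "nat \<Rightarrow> nat \<Rightarrow> (nat \<Rightarrow> int) \<Rightarrow> enat" where
  "dyoke_ecc n m u = (SUP v\<in>dyoke_vertices n m. dyoke_dist n m u v)"

end

theory Submission
  imports Defs
begin

text \<open>Track the prefix sums \<open>T\<^sub>k(u) = u\<^sub>0 + \<dots> + u\<^sub>k\<close>, \<open>k \<le> m\<close>. An edge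
  \<open>(i, i+1)\<close> moves a unit between two consecutive coordinates, so it changes only \<open>T\<^sub>i\<close>, by \<open>\<plusminus>1\<close>,
  except that the reduction mod \<open>n\<close> of coordinate \<open>0\<close> may shift all prefix sums by the same
  multiple of \<open>n\<close>. Hence the potential \<open>min\<^sub>c \<Sum>\<^sub>k |T\<^sub>k(u) + c n|\<close> grows by at most one per
  step and vanishes at \<open>0\<close>. The vertex whose prefix sums alternate between \<open>\<lfloor>n/2\<rfloor>\<close> and
  \<open>\<lceil>n/2\<rceil>\<close> has potential at least \<open>\<lfloor>n(m+1)/2\<rfloor>\<close>, since for \<open>c \<ge> 0\<close> each summand is at least
  \<open>T\<^sub>k\<close> and for \<open>c < 0\<close> at least \<open>n - T\<^sub>k\<close>.\<close>

definition prefix_sum :: "(nat \<Rightarrow> int) \<Rightarrow> nat \<Rightarrow> int" where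
  "prefix_sum u k = (\<Sum>j\<le>k. u j)"

definition potential :: "nat \<Rightarrow> nat \<Rightarrow> (nat \<Rightarrow> int) \<Rightarrow> int \<Rightarrow> int" where
  "potential n m u c = (\<Sum>k\<le>m. \<bar>prefix_sum u k + c * int n\<bar>)"

lemma dyoke_adj_difference:
  assumes "dyoke_adj n m u v"
  obtains i \<epsilon> d where "i \<le> m" "\<bar>\<epsilon>\<bar> \<le> 1" "i \<noteq> 0 \<Longrightarrow> d = 0"
    "\<And>j. j \<le> m \<Longrightarrow>
       v j - u j = (if j = i then \<epsilon> + d * int n else if j = i + 1 then - \<epsilon> else 0)"
proof -
  from assms obtain i where i: "i \<le> m"
    and same: "\<forall>j\<le>m+1. j \<noteq> i \<and> j \<noteq> i + 1 \<longrightarrow> u j = v j"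
    and moved: "(coord_eq n m i (u i) (v i + 1) \<and> coord_eq n m (i+1) (u (i+1)) (v (i+1) - 1)) \<or>
        (coord_eq n m i (u i) (v i - 1) \<and> coord_eq n m (i+1) (u (i+1)) (v (i+1) + 1))"
    unfolding dyoke_adj_def by blast
  from moved obtain s :: int where s: "s = 1 \<or> s = -1"
    and at_i: "coord_eq n m i (u i) (v i + s)"
    and at_succ: "coord_eq n m (i+1) (u (i+1)) (v (i+1) - s)"
    by (metis diff_minus_eq_add diff_conv_add_uminus)
  obtain d where d: "v i - u i = - s + d * int n" "i \<noteq> 0 \<Longrightarrow> d = 0"
  proof (cases "i = 0")
    case True
    with at_i have "int n dvd u i - (v i + s)"
      by (simp add: coord_eq_def mod_eq_dvd_iff)
    then obtain e where "u i - (v i + s) = int n * e" by (rule dvdE)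
    then have "v i - u i = - s + (- e) * int n" by (simp add: algebra_simps)
    with True that show ?thesis by blast
  next
    case False
    with i at_i have "v i - u i = - s + 0 * int n" by (simp add: coord_eq_def)
    with False that show ?thesis by blast
  qed
  have "v (i+1) - u (i+1) = s" if "i + 1 \<le> m"
    using that at_succ by (simp add: coord_eq_def)
  with same d(1) have "v j - u j = (if j = i then - s + d * int n else if j = i + 1 then - (- s) else 0)"
    if "j \<le> m" for j
    using that by auto
  moreover have "\<bar>- s\<bar> \<le> 1" using s by auto
  ultimately show ?thesis using that i d(2) by blast
qed

lemma prefix_sum_difference:
  assumes "\<And>j. j \<le> m \<Longrightarrow>
      v j - u j = (if j = i then \<epsilon> + d * int n else if j = i + 1 then - \<epsilon> else 0)"
    and "i \<noteq> 0 \<Longrightarrow> d = 0" and "k \<le> m"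
  shows "prefix_sum v k - prefix_sum u k = d * int n + (if k = i then \<epsilon> else 0)"
  using assms(3)
proof (induction k)
  case 0
  then show ?case using assms(1,2) by (auto simp: prefix_sum_def)
next
  case (Suc k)
  have "prefix_sum v (Suc k) - prefix_sum u (Suc k)
      = (prefix_sum v k - prefix_sum u k) + (v (Suc k) - u (Suc k))"
    by (simp add: prefix_sum_def)
  then show ?case using Suc assms(1,2) by auto
qed

lemma dyoke_adj_potential_le:
  assumes "dyoke_adj n m u v"
  shows "\<exists>c'. potential n m v c' \<le> potential n m u c + 1"
proof -
  obtain i \<epsilon> d where i: "i \<le> m" and \<epsilon>: "\<bar>\<epsilon>\<bar> \<le> 1" and d: "i \<noteq> 0 \<Longrightarrow> d = 0"
    and diff: "\<And>j. j \<le> m \<Longrightarrow>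
       v j - u j = (if j = i then \<epsilon> + d * int n else if j = i + 1 then - \<epsilon> else 0)"
    using dyoke_adj_difference[OF assms] by blast
  have "potential n m v (c - d)
      \<le> (\<Sum>k\<le>m. \<bar>prefix_sum u k + c * int n\<bar> + (if k = i then 1 else 0))"
    unfolding potential_def
  proof (rule sum_mono)
    fix k assume "k \<in> {..m}"
    then have "prefix_sum v k + (c - d) * int n
        = prefix_sum u k + c * int n + (if k = i then \<epsilon> else 0)"
      using prefix_sum_difference[OF diff d] by (simp add: algebra_simps)
    then show "\<bar>prefix_sum v k + (c - d) * int n\<bar>
        \<le> \<bar>prefix_sum u k + c * int n\<bar> + (if k = i then 1 else 0)"
      using \<epsilon> by auto
  qed
  also have "\<dots> = potential n m u c + 1"
    using i by (simp add: sum.distrib potential_def)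
  finally show ?thesis by blast
qed

lemma relpowp_dyoke_adj_potential_le:
  assumes "(dyoke_adj n m ^^ k) (\<lambda>_. 0) v"
  shows "\<exists>c. potential n m v c \<le> int k"
  using assms
proof (induction k arbitrary: v)
  case 0
  then have "v = (\<lambda>_. 0)" by simp
  then have "potential n m v 0 = 0" by (simp add: potential_def prefix_sum_def)
  then show ?case by (metis of_nat_0 order_refl)
next
  case (Suc k)
  then obtain w where w: "(dyoke_adj n m ^^ k) (\<lambda>_. 0) w" "dyoke_adj n m w v" by auto
  from Suc.IH[OF w(1)] obtain c where "potential n m w c \<le> int k" by blast
  moreover obtain c' where "potential n m v c' \<le> potential n m w c + 1"
    using dyoke_adj_potential_le[OF w(2)] by blast
  ultimately have "potential n m v c' \<le> int (Suc k)" by simp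
  then show ?case by blast
qed

lemma dyoke_dist_zero_ge_potential:
  assumes "\<And>c. int N \<le> potential n m v c"
  shows "enat N \<le> dyoke_dist n m (\<lambda>_. 0) v"
proof (cases "\<exists>k. (dyoke_adj n m ^^ k) (\<lambda>_. 0) v")
  case True
  define L where "L = (LEAST k. (dyoke_adj n m ^^ k) (\<lambda>_. 0) v)"
  have "(dyoke_adj n m ^^ L) (\<lambda>_. 0) v" unfolding L_def using True by (rule LeastI_ex)
  then obtain c where "potential n m v c \<le> int L"
    using relpowp_dyoke_adj_potential_le by blast
  with assms[of c] have "N \<le> L" by simp
  then show ?thesis using True by (simp add: dyoke_dist_def L_def)
next
  case False
  then show ?thesis by (simp add: dyoke_dist_def)
qed

definition half_prefix :: "nat \<Rightarrow> nat \<Rightarrow> int" where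
  "half_prefix n k = int (n div 2) + int (k mod 2) * int (n mod 2)"

definition far_vertex :: "nat \<Rightarrow> nat \<Rightarrow> nat \<Rightarrow> int" where
  "far_vertex n m j =
    (if j = 0 then half_prefix n 0
     else if j \<le> m then half_prefix n j - half_prefix n (j - 1)
     else if j = m + 1 then int n - half_prefix n m else 0)"

lemma prefix_sum_far_vertex:
  "k \<le> m \<Longrightarrow> prefix_sum (far_vertex n m) k = half_prefix n k"
  by (induction k) (simp_all add: prefix_sum_def far_vertex_def)

lemma half_prefix_bounds: "n > 1 \<Longrightarrow> 1 \<le> half_prefix n k \<and> half_prefix n k \<le> int n - 1"
  unfolding half_prefix_def by (cases "k mod 2 = 0") (auto, presburger+)

lemma far_vertex_in_dyoke_vertices:
  assumes "n > 1"
  shows "far_vertex n m \<in> dyoke_vertices n m"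
proof -
  have middle: "far_vertex n m j \<in> {-1, 0, 1}" if "1 \<le> j" "j \<le> m" for j
  proof -
    have "j mod 2 = 0 \<and> (j - 1) mod 2 = 1 \<or> j mod 2 = 1 \<and> (j - 1) mod 2 = 0"
      using that by presburger
    moreover have "n mod 2 = 0 \<or> n mod 2 = 1" by presburger
    ultimately show ?thesis
      using that by (auto simp: far_vertex_def half_prefix_def)
  qed
  have "(\<Sum>j\<le>m+1. far_vertex n m j) = prefix_sum (far_vertex n m) m + far_vertex n m (m + 1)"
    by (simp add: prefix_sum_def)
  also have "\<dots> = int n" by (simp add: prefix_sum_far_vertex far_vertex_def)
  moreover have "far_vertex n m 0 \<in> {0..int n - 1}" "far_vertex n m (m + 1) \<in> {0..int n - 1}"
    using half_prefix_bounds[OF assms, of 0] half_prefix_bounds[OF assms, of m]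
    by (auto simp: far_vertex_def)
  ultimately show ?thesis
    using middle by (auto simp: dyoke_vertices_def far_vertex_def)
qed

lemma sum_mod_2_atMost: "(\<Sum>k\<le>m. int (k mod 2)) = int ((m + 1) div 2)"
  by (induction m) (auto, presburger)

lemma sum_half_prefix:
  "(\<Sum>k\<le>m. half_prefix n k) = int ((n * (m + 1)) div 2)"
proof -
  define t where "t = int (n div 2)"
  define r where "r = int (n mod 2)"
  have n: "int n = 2 * t + r"
    unfolding t_def r_def by (metis div_mult_mod_eq mult.commute of_nat_add of_nat_mult of_nat_numeral)
  have r: "r = 0 \<or> r = 1" unfolding r_def by auto
  have "(\<Sum>k\<le>m. half_prefix n k) = (int m + 1) * t + int ((m + 1) div 2) * r"
    unfolding half_prefix_def t_def[symmetric] r_def[symmetric]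
    by (simp add: sum.distrib sum_mod_2_atMost flip: sum_distrib_right)
  also have "\<dots> = (2 * ((int m + 1) * t) + r * (int m + 1)) div 2"
    using r by (auto simp: zdiv_int)
  also have "\<dots> = int ((n * (m + 1)) div 2)"
    using n by (simp add: zdiv_int algebra_simps)
  finally show ?thesis .
qed

lemma sum_half_prefix_le_complement:
  "(\<Sum>k\<le>m. half_prefix n k) \<le> (\<Sum>k\<le>m. int n - half_prefix n k)"
proof -
  have complement: "int n - half_prefix n k = int (n div 2) + (1 - int (k mod 2)) * int (n mod 2)"
    for k
    unfolding half_prefix_def by (simp add: algebra_simps flip: of_nat_add) presburger
  have "(\<Sum>k\<le>m. int (k mod 2)) \<le> (\<Sum>k\<le>m. 1 - int (k mod 2))"
    by (simp add: sum_subtractf sum_mod_2_atMost)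
  then have "(\<Sum>k\<le>m. int (k mod 2)) * int (n mod 2) \<le> (\<Sum>k\<le>m. 1 - int (k mod 2)) * int (n mod 2)"
    by (rule mult_right_mono) simp
  then show ?thesis
    unfolding complement by (simp add: half_prefix_def sum.distrib flip: sum_distrib_right)
qed

lemma potential_far_vertex_ge:
  "int ((n * (m + 1)) div 2) \<le> potential n m (far_vertex n m) c"
proof (cases "c \<ge> 0")
  case True
  have "(\<Sum>k\<le>m. half_prefix n k) \<le> potential n m (far_vertex n m) c"
    unfolding potential_def
  proof (rule sum_mono)
    fix k assume "k \<in> {..m}"
    then show "half_prefix n k \<le> \<bar>prefix_sum (far_vertex n m) k + c * int n\<bar>"
      using True by (simp add: prefix_sum_far_vertex half_prefix_def)
  qed
  then show ?thesis by (simp add: sum_half_prefix)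
next
  case False
  have "(\<Sum>k\<le>m. int n - half_prefix n k) \<le> potential n m (far_vertex n m) c"
    unfolding potential_def
  proof (rule sum_mono)
    fix k assume "k \<in> {..m}"
    moreover have "c * int n \<le> - int n"
      using False mult_right_mono[of c "-1" "int n"] by simp
    ultimately show "int n - half_prefix n k \<le> \<bar>prefix_sum (far_vertex n m) k + c * int n\<bar>"
      by (simp add: prefix_sum_far_vertex)
  qed
  then show ?thesis
    using sum_half_prefix_le_complement[where m = m and n = n] by (simp add: sum_half_prefix)
qed

theorem lemma5p16:
  fixes n m :: nat
  assumes "n > 1" and "m \<ge> 1"
  shows "dyoke_ecc n m (\<lambda>_. 0) \<ge> enat ((n * (m + 1)) div 2)"
proof -
  have "enat ((n * (m + 1)) div 2) \<le> dyoke_dist n m (\<lambda>_. 0) (far_vertex n m)"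
    by (rule dyoke_dist_zero_ge_potential) (rule potential_far_vertex_ge)
  also have "\<dots> \<le> dyoke_ecc n m (\<lambda>_. 0)"
    unfolding dyoke_ecc_def using far_vertex_in_dyoke_vertices[OF assms(1)] by (rule SUP_upper)
  finally show ?thesis .
qed

end
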